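(* Let $X$ be a topological space in which every open set is a union of countably many clopen sets. Then $X$ is a QN space if, and only if, for every Borel function $\Psi:X\to\mathbb{N}^{\mathbb{N}}$, $\Psi[X]$ is bounded.
   Context: For a metric space $Y$, $f:X\to Y$ is a quasi-normal limit of $f_n:X\to Y$ if there are positive reals $\epsilon_n\to0$ such that for each $x\in X$, $d(f_n(x),f(x))<\epsilon_n$ for all but finitely many $n$. $X$ is a QN space if whenever a sequence of continuous real-valued functions on $X$ converges pointwise to $0$, it converges to $0$ quasi-normally. $\Psi:X\to\mathbb{N}^{\mathbb{N}}$ is Borel if preimages of open sets are Borel. $Y\subseteq\mathbb{N}^{\mathbb{N}}$ is bounded if there is $g\in\mathbb{N}^{\mathbb{N}}$ such that each $f\in Y$ satisfies $f(n)\le g(n)$ for all but finitely many $n$. *)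

theory Defs
  imports "HOL-Analysis.Analysis"
begin

definition quasi_normal_limit :: "(nat \<Rightarrow> 'a \<Rightarrow> 'b::metric_space) \<Rightarrow> ('a \<Rightarrow> 'b) \<Rightarrow> bool" where
  "quasi_normal_limit fs f \<longleftrightarrow>
     (\<exists>\<epsilon>::nat \<Rightarrow> real. (\<forall>n. \<epsilon> n > 0) \<and> \<epsilon> \<longlonglongrightarrow> 0 \<and>
        (\<forall>x. \<forall>\<^sub>F n in sequentially. dist (fs n x) (f x) < \<epsilon> n))"

definition QN_space :: "'a::topological_space itself \<Rightarrow> bool" where
  "QN_space _ \<longleftrightarrow>
     (\<forall>fs :: nat \<Rightarrow> 'a \<Rightarrow> real.
        (\<forall>n. continuous_on UNIV (fs n)) \<and> (\<forall>x. (\<lambda>n. fs n x) \<longlonglongrightarrow> 0)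
        \<longrightarrow> quasi_normal_limit fs (\<lambda>x. 0))"

text \<open>Borel function: preimages of open sets are Borel. nat => nat carries the product
  (Baire space) topology, nat the discrete (order) topology.\<close>
definition Borel_function :: "('a::topological_space \<Rightarrow> 'b::topological_space) \<Rightarrow> bool" where
  "Borel_function \<Psi> \<longleftrightarrow> (\<forall>U. open U \<longrightarrow> \<Psi> -` U \<in> sets borel)"

definition bounded_baire :: "(nat \<Rightarrow> nat) set \<Rightarrow> bool" where
  "bounded_baire Y \<longleftrightarrow> (\<exists>g::nat \<Rightarrow> nat. \<forall>f\<in>Y. \<forall>\<^sub>F n in sequentially. f n \<le> g n)"

end

theory Submission
  imports Defs
begin

text \<open>
  Backward direction: for a pointwise null sequence of continuous functions f n, the modulus of
  convergence \<Psi> x k (the first stage from which |f n x| < 2^(-k)) is a Borel map; a bound g for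
  its image, composed with a slowly divergent inverse h of g, gives the rates 2^(-h n) required
  for quasi-normal convergence.

  Forward direction: QN is first turned into a bounding principle for clopen sets, using the
  continuous test functions exit_weight.  Via clopen outer approximations of closed sets it
  extends to increasing closed chains, which shows that complements of F-sigma sets are F-sigma,
  so every Borel set is F-sigma, and the principle extends to Borel chains.  Applied to the
  chains {x. \<Psi> x k \<le> m} it bounds the image of a Borel \<Psi>.
\<close>

definition clopen :: "'a::topological_space set \<Rightarrow> bool" where
  "clopen S \<longleftrightarrow> open S \<and> closed S"

lemma clopen_Compl: "clopen S \<Longrightarrow> clopen (- S)"
  unfolding clopen_def by (simp add: open_Compl closed_Compl)

lemma clopen_Int: "clopen S \<Longrightarrow> clopen T \<Longrightarrow> clopen (S \<inter> T)"
  unfolding clopen_def by auto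

lemma clopen_INT: "finite I \<Longrightarrow> (\<And>i. i \<in> I \<Longrightarrow> clopen (S i)) \<Longrightarrow> clopen (\<Inter>i\<in>I. S i)"
  unfolding clopen_def by (auto intro: open_INT closed_INT)

lemma clopen_UN: "finite I \<Longrightarrow> (\<And>i. i \<in> I \<Longrightarrow> clopen (S i)) \<Longrightarrow> clopen (\<Union>i\<in>I. S i)"
  unfolding clopen_def by (auto intro: open_UN closed_UN)

definition exit_weight :: "(nat \<Rightarrow> 'a set) \<Rightarrow> 'a \<Rightarrow> real" where
  "exit_weight S x = (if \<exists>k. x \<notin> S k then (1/2)^(LEAST k. x \<notin> S k) else 0)"

lemma exit_weight_eq:
  assumes "\<forall>j<k. x \<in> S j" and "x \<notin> S k"
  shows "exit_weight S x = (1/2)^k"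
proof -
  have "(LEAST k. x \<notin> S k) = k"
    using assms by (intro Least_equality) (auto simp: not_less[symmetric])
  then show ?thesis using assms(2) unfolding exit_weight_def by auto
qed

lemma exit_weight_small:
  assumes "\<forall>k\<le>K. x \<in> S k"
  shows "\<bar>exit_weight S x\<bar> \<le> (1/2)^Suc K"
proof (cases "\<exists>k. x \<notin> S k")
  case True
  define L where "L = (LEAST k. x \<notin> S k)"
  have "x \<notin> S L" unfolding L_def using True by (rule LeastI_ex)
  then have "Suc K \<le> L" using assms by (meson not_less_eq_eq)
  then have "(1/2::real)^L \<le> (1/2)^Suc K" by (intro power_decreasing) auto
  then show ?thesis using True unfolding exit_weight_def L_def by simp
qed (simp add: exit_weight_def)

lemma exit_weight_large:
  assumes "x \<notin> S k"
  shows "(1/2)^k \<le> exit_weight S x"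
proof -
  have "(LEAST k. x \<notin> S k) \<le> k" using assms by (rule Least_le)
  then have "(1/2::real)^k \<le> (1/2)^(LEAST k. x \<notin> S k)" by (intro power_decreasing) auto
  then show ?thesis using assms unfolding exit_weight_def by auto
qed

lemma continuous_exit_weight:
  assumes clopen: "\<And>k. clopen (S k)"
  shows "continuous_on UNIV (exit_weight S)"
  unfolding continuous_on_def
proof (intro ballI tendstoI)
  fix x :: 'a and e :: real
  assume "e > 0"
  have "\<exists>N. open N \<and> x \<in> N \<and> (\<forall>y\<in>N. dist (exit_weight S y) (exit_weight S x) < e)"
  proof (cases "\<exists>k. x \<notin> S k")
    case True
    define k where "k = (LEAST k. x \<notin> S k)"
    have "x \<notin> S k" unfolding k_def using True by (rule LeastI_ex)
    moreover have "\<forall>j<k. x \<in> S j" unfolding k_def using not_less_Least by blast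
    moreover have "clopen ((\<Inter>j\<in>{..<k}. S j) \<inter> - S k)"
      using clopen by (intro clopen_Int clopen_INT clopen_Compl) auto
    ultimately show ?thesis
      using \<open>e > 0\<close> exit_weight_eq[of k _ S] unfolding clopen_def
      by (intro exI[of _ "(\<Inter>j\<in>{..<k}. S j) \<inter> - S k"]) auto
  next
    case False
    obtain K where K: "(1/2::real)^K < e" using real_arch_pow_inv[OF \<open>e > 0\<close>, of "1/2"] by auto
    have small: "\<bar>exit_weight S y\<bar> < e" if "y \<in> (\<Inter>j\<in>{..K}. S j)" for y
    proof -
      have "(1/2::real)^Suc K \<le> (1/2)^K" by (intro power_decreasing) auto
      then show ?thesis using exit_weight_small[of K y S] that K by auto
    qed
    have "clopen (\<Inter>j\<in>{..K}. S j)" using clopen by (intro clopen_INT) auto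
    moreover have "exit_weight S x = 0" using False unfolding exit_weight_def by simp
    ultimately show ?thesis
      using False small unfolding clopen_def
      by (intro exI[of _ "\<Inter>j\<in>{..K}. S j"]) (auto simp: dist_real_def)
  qed
  then show "\<forall>\<^sub>F y in at x within UNIV. dist (exit_weight S y) (exit_weight S x) < e"
    unfolding eventually_at_topological by blast
qed

text \<open>Apply QN to
  f n = exit_weight (\<lambda>k. C k n) and compare the rates \<epsilon> n with 2^(-k).\<close>
lemma QN_clopen_diagonal:
  fixes C :: "nat \<Rightarrow> nat \<Rightarrow> 'a::topological_space set"
  assumes QN: "QN_space TYPE('a)" and clopen: "\<And>k n. clopen (C k n)"
    and eventually_in: "\<And>k x. \<forall>\<^sub>F n in sequentially. x \<in> C k n"
  obtains g where "\<And>x. \<forall>\<^sub>F k in sequentially. \<forall>n\<ge>g k. x \<in> C k n"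
proof -
  define fs where "fs n = exit_weight (\<lambda>k. C k n)" for n
  have "continuous_on UNIV (fs n)" for n
    unfolding fs_def using clopen by (rule continuous_exit_weight)
  moreover have "(\<lambda>n. fs n x) \<longlonglongrightarrow> 0" for x
  proof (rule tendstoI)
    fix e :: real assume "e > 0"
    obtain K where K: "(1/2::real)^K < e" using real_arch_pow_inv[OF \<open>e > 0\<close>, of "1/2"] by auto
    have "(1/2::real)^Suc K \<le> (1/2)^K" by (intro power_decreasing) auto
    with K have small: "\<bar>exit_weight S x\<bar> < e" if "\<forall>k\<le>K. x \<in> S k" for S
      using exit_weight_small[OF that] by linarith
    have "\<forall>\<^sub>F n in sequentially. \<forall>k\<in>{..K}. x \<in> C k n"
      by (rule eventually_ball_finite) (auto intro: eventually_in)
    then show "\<forall>\<^sub>F n in sequentially. dist (fs n x) 0 < e"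
      by eventually_elim (simp add: fs_def small)
  qed
  ultimately obtain \<epsilon> :: "nat \<Rightarrow> real" where "\<epsilon> \<longlonglongrightarrow> 0"
    and below: "\<And>x. \<forall>\<^sub>F n in sequentially. dist (fs n x) 0 < \<epsilon> n"
    using QN unfolding QN_space_def quasi_normal_limit_def by blast
  have "\<forall>k. \<exists>N. \<forall>n\<ge>N. \<epsilon> n < (1/2)^k"
    using order_tendstoD(2)[OF \<open>\<epsilon> \<longlonglongrightarrow> 0\<close>] unfolding eventually_sequentially by simp
  then obtain N where N: "\<And>k n. N k \<le> n \<Longrightarrow> \<epsilon> n < (1/2)^k" by metis
  have "\<forall>\<^sub>F k in sequentially. \<forall>n\<ge>max k (N k). x \<in> C k n" for x
  proof -
    obtain M where M: "\<And>n. M \<le> n \<Longrightarrow> fs n x < \<epsilon> n"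
      using below[of x] unfolding eventually_sequentially dist_real_def by fastforce
    have "x \<in> C k n" if "M \<le> k" "max k (N k) \<le> n" for k n
      using that M[of n] N[of k n] exit_weight_large[of x "\<lambda>k. C k n" k]
      unfolding fs_def by (cases "x \<in> C k n") auto
    then show ?thesis unfolding eventually_sequentially by blast
  qed
  then show ?thesis by (rule that[of "\<lambda>k. max k (N k)"])
qed

definition countably_clopen_space :: "'a::topological_space itself \<Rightarrow> bool" where
  "countably_clopen_space _ \<longleftrightarrow>
     (\<forall>U::'a set. open U \<longrightarrow> (\<exists>\<C>. countable \<C> \<and> (\<forall>C\<in>\<C>. clopen C) \<and> U = \<Union>\<C>))"

lemma open_clopen_sequence:
  fixes U :: "'a::topological_space set"
  assumes "countably_clopen_space TYPE('a)" and "open U"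
  obtains c :: "nat \<Rightarrow> 'a set" where "\<And>i. clopen (c i)" and "U = (\<Union>i. c i)"
proof -
  obtain \<C> where \<C>: "countable \<C>" "\<forall>C\<in>\<C>. clopen C" "U = \<Union>\<C>"
    using assms unfolding countably_clopen_space_def by blast
  show ?thesis
  proof (cases "\<C> = {}")
    case True
    then show ?thesis using \<C> that[of "\<lambda>_. {}"] by (auto simp: clopen_def)
  next
    case False
    then show ?thesis using \<C> that[of "from_nat_into \<C>"] by (simp add: from_nat_into range_from_nat_into)
  qed
qed

definition clopen_approximation :: "(nat \<Rightarrow> 'a::topological_space set) \<Rightarrow> (nat \<Rightarrow> nat \<Rightarrow> 'a set) \<Rightarrow> bool" where
  "clopen_approximation F D \<longleftrightarrow>
     (\<forall>m i. clopen (D m i)) \<and> (\<forall>m m' i i'. m \<le> m' \<longrightarrow> i' \<le> i \<longrightarrow> D m i \<subseteq> D m' i') \<and>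
     (\<forall>m. F m = (\<Inter>i. D m i))"

(* Write - F m as a union of clopen sets c m j and remove the finitely many pieces with
   j \<le> i and m \<le> m' \<le> i. *)
lemma clopen_approximation_exists:
  fixes F :: "nat \<Rightarrow> 'a::topological_space set"
  assumes space: "countably_clopen_space TYPE('a)"
    and closed: "\<And>m. closed (F m)" and mono: "\<And>m. F m \<subseteq> F (Suc m)"
  shows "\<exists>D. clopen_approximation F D"
proof -
  have "\<forall>m. \<exists>c::nat \<Rightarrow> 'a set. (\<forall>j. clopen (c j)) \<and> - F m = (\<Union>j. c j)"
  proof
    fix m
    obtain c :: "nat \<Rightarrow> 'a set" where "\<And>j. clopen (c j)" "- F m = (\<Union>j. c j)"
      using open_clopen_sequence[OF space open_Compl[OF closed[of m]]] by blast
    then show "\<exists>c::nat \<Rightarrow> 'a set. (\<forall>j. clopen (c j)) \<and> - F m = (\<Union>j. c j)" by blast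
  qed
  from choice[OF this] obtain c :: "nat \<Rightarrow> nat \<Rightarrow> 'a set"
    where c: "\<forall>m. (\<forall>j. clopen (c m j)) \<and> - F m = (\<Union>j. c m j)" by blast
  then have clopen_c: "\<And>m j. clopen (c m j)" and compl_F: "\<And>m. - F m = (\<Union>j. c m j)"
    by auto
  define D where "D m i = - (\<Union>j\<in>{..i}. \<Union>m'\<in>{m..i}. c m' j)" for m i
  have D_clopen: "clopen (D m i)" for m i
    unfolding D_def using clopen_c by (intro clopen_Compl clopen_UN) auto
  have D_mono: "D m i \<subseteq> D m' i'" if "m \<le> m'" "i' \<le> i" for m m' i i'
    unfolding D_def using that by auto
  have F_eq: "F m = (\<Inter>i. D m i)" for m
  proof
    show "F m \<subseteq> (\<Inter>i. D m i)"
      unfolding D_def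
    proof (intro subsetI INT_I ComplI)
      fix x i assume "x \<in> F m" and "x \<in> (\<Union>j\<in>{..i}. \<Union>m'\<in>{m..i}. c m' j)"
      then obtain j m' where "m \<le> m'" "x \<in> c m' j" by auto
      then show False
        using lift_Suc_mono_le[of F, OF mono \<open>m \<le> m'\<close>] \<open>x \<in> F m\<close> compl_F[of m'] by blast
    qed
    show "(\<Inter>i. D m i) \<subseteq> F m"
    proof
      fix x assume x: "x \<in> (\<Inter>i. D m i)"
      show "x \<in> F m"
      proof (rule ccontr)
        assume "x \<notin> F m"
        then obtain j where "x \<in> c m j" using compl_F[of m] by auto
        then have "x \<notin> D m (max j m)" unfolding D_def by force
        with x show False by blast
      qed
    qed
  qed
  show ?thesis
    unfolding clopen_approximation_def
    by (intro exI[of _ D] conjI allI impI) (simp_all add: D_clopen D_mono F_eq)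
qed

lemma clopen_approximationD:
  assumes "clopen_approximation F D"
  shows clopen_approximation_clopen: "clopen (D m i)"
    and clopen_approximation_mono: "m \<le> m' \<Longrightarrow> i' \<le> i \<Longrightarrow> D m i \<subseteq> D m' i'"
    and clopen_approximation_lower: "F m \<subseteq> D m i"
    and clopen_approximation_limit: "(\<And>i. x \<in> D m i) \<Longrightarrow> x \<in> F m"
proof -
  have F_eq: "F m = (\<Inter>i. D m i)"
    using assms unfolding clopen_approximation_def by blast
  show "clopen (D m i)"
    using assms unfolding clopen_approximation_def by blast
  show "m \<le> m' \<Longrightarrow> i' \<le> i \<Longrightarrow> D m i \<subseteq> D m' i'"
    using assms unfolding clopen_approximation_def by blast
  show "F m \<subseteq> D m i" unfolding F_eq by blast
  show "(\<And>i. x \<in> D m i) \<Longrightarrow> x \<in> F m" unfolding F_eq by blast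
qed

text \<open>The set of points at which the approximations do not shrink between stages i and j is clopen:
  near x only the finitely many indices m \<le> p matter, p being the first m with x \<in> D m i.\<close>
lemma stable_set_clopen:
  fixes D :: "nat \<Rightarrow> nat \<Rightarrow> 'a::topological_space set"
  assumes approx: "clopen_approximation F D" and cover: "\<And>x. \<exists>m. x \<in> F m"
  shows "clopen {x. \<forall>m. x \<in> D m i \<longrightarrow> x \<in> D m j}"
proof -
  note clopen_D = clopen_approximation_clopen[OF approx]
  have mono_D: "\<And>m m' i. m \<le> m' \<Longrightarrow> D m i \<subseteq> D m' i"
    using clopen_approximation_mono[OF approx] by blast
  have covered: "\<And>x. \<exists>m. x \<in> D m i"
    using cover clopen_approximation_lower[OF approx] by blast
  let ?Y = "{x. \<forall>m. x \<in> D m i \<longrightarrow> x \<in> D m j}"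
  have "?Y = (\<Inter>m. - D m i \<union> D m j)" by auto
  then have "closed ?Y"
    using clopen_D by (auto simp: clopen_def intro!: closed_INT closed_Un closed_Compl)
  moreover have "open ?Y"
  proof (rule open_subopen[THEN iffD2], rule ballI)
    fix x assume "x \<in> ?Y"
    define p where "p = (LEAST m. x \<in> D m i)"
    have "x \<in> D p i" unfolding p_def using covered by (rule LeastI_ex)
    have not_below: "x \<notin> D m i" if "m < p" for m using that unfolding p_def by (rule not_less_Least)
    define T where "T = D p j \<inter> (\<Inter>m\<in>{..<p}. - D m i)"
    have "open T" unfolding T_def using clopen_D
      by (intro open_Int open_INT open_Compl) (auto simp: clopen_def)
    moreover have "x \<in> T" unfolding T_def using \<open>x \<in> ?Y\<close> \<open>x \<in> D p i\<close> not_below by auto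
    moreover have "T \<subseteq> ?Y"
      unfolding T_def using mono_D[of p _ j] by (auto simp: not_less[symmetric])
    ultimately show "\<exists>T. open T \<and> x \<in> T \<and> T \<subseteq> ?Y" by blast
  qed
  ultimately show ?thesis by (simp add: clopen_def)
qed

(* Each point of some F m0 is eventually stable: below m0 each D m i either keeps x forever
   or loses it for good, and from m0 on x stays in every D m i. *)
lemma stable_eventually:
  assumes approx: "clopen_approximation F D" and mono: "\<And>m. F m \<subseteq> F (Suc m)" and "x \<in> F m0"
  shows "\<forall>\<^sub>F i in sequentially. \<forall>m. x \<in> D m i \<longrightarrow> x \<in> D m (Suc i)"
proof -
  have D_anti: "\<And>m i i'. i' \<le> i \<Longrightarrow> D m i \<subseteq> D m i'"
    using clopen_approximation_mono[OF approx] by blast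
  note F_D = clopen_approximation_lower[OF approx]
  have "\<forall>\<^sub>F i in sequentially. x \<in> D m i \<longrightarrow> x \<in> D m (Suc i)" for m
  proof (cases "x \<in> F m")
    case True
    then show ?thesis using F_D by (blast intro: always_eventually)
  next
    case False
    then obtain i0 where "x \<notin> D m i0" using clopen_approximation_limit[OF approx] by blast
    then have "\<forall>i\<ge>i0. x \<notin> D m i" using D_anti by blast
    then show ?thesis unfolding eventually_sequentially by blast
  qed
  then have early: "\<forall>\<^sub>F i in sequentially. \<forall>m\<in>{..<m0}. x \<in> D m i \<longrightarrow> x \<in> D m (Suc i)"
    by (intro eventually_ball_finite) auto
  have late: "x \<in> D m i" if "m0 \<le> m" for m i
    using lift_Suc_mono_le[of F, OF mono that] \<open>x \<in> F m0\<close> F_D by blast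
  from early show ?thesis
    by eventually_elim (meson late lessThan_iff not_le)
qed

lemma stable_imp_limit:
  assumes approx: "clopen_approximation F D" and "x \<in> D m i0"
    and stable: "\<And>i. i0 \<le> i \<Longrightarrow> x \<in> D m i \<Longrightarrow> x \<in> D m (Suc i)"
  shows "x \<in> F m"
proof -
  have D_anti: "\<And>i i'. i' \<le> i \<Longrightarrow> D m i \<subseteq> D m i'"
    using clopen_approximation_mono[OF approx] by blast
  have "x \<in> D m i" if "i0 \<le> i" for i
    using that by (induction rule: dec_induct) (use \<open>x \<in> D m i0\<close> stable in auto)
  then have "x \<in> D m i" for i
    using D_anti[of i i0] \<open>x \<in> D m i0\<close> by (cases "i0 \<le> i") auto
  then show ?thesis by (rule clopen_approximation_limit[OF approx])
qed

text \<open>First QN bounds the stage h k from which the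
  approximations stabilise, then a second application bounds the index g k.\<close>
lemma QN_closed_chain_bound:
  fixes F :: "nat \<Rightarrow> nat \<Rightarrow> 'a::topological_space set"
  assumes QN: "QN_space TYPE('a)" and space: "countably_clopen_space TYPE('a)"
    and closed: "\<And>k m. closed (F k m)" and mono: "\<And>k m. F k m \<subseteq> F k (Suc m)"
    and cover: "\<And>k x. \<exists>m. x \<in> F k m"
  obtains g where "\<And>x. \<forall>\<^sub>F k in sequentially. x \<in> F k (g k)"
proof -
  have "\<forall>k. \<exists>Dk. clopen_approximation (F k) Dk"
    using clopen_approximation_exists[OF space] closed mono by blast
  from choice[OF this] obtain D where approx: "\<And>k. clopen_approximation (F k) (D k)"
    by blast
  note clopen_D = clopen_approximation_clopen[OF approx]
    and F_D = clopen_approximation_lower[OF approx]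
  define Y where "Y k i = {x. \<forall>m. x \<in> D k m i \<longrightarrow> x \<in> D k m (Suc i)}" for k i
  have Y_clopen: "clopen (Y k i)" for k i
    unfolding Y_def by (rule stable_set_clopen[OF approx cover])
  have Y_eventually: "\<forall>\<^sub>F i in sequentially. x \<in> Y k i" for k x
  proof -
    obtain m0 where "x \<in> F k m0" using cover by blast
    from stable_eventually[OF approx mono this] show ?thesis unfolding Y_def by simp
  qed
  obtain h where h: "\<And>x. \<forall>\<^sub>F k in sequentially. \<forall>i\<ge>h k. x \<in> Y k i"
    using QN_clopen_diagonal[where C=Y, OF QN Y_clopen Y_eventually] by blast
  have D_eventually: "\<forall>\<^sub>F m in sequentially. x \<in> D k m (h k)" for k x
  proof -
    obtain m0 where "x \<in> F k m0" using cover by blast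
    then have "\<forall>m\<ge>m0. x \<in> D k m (h k)"
      using lift_Suc_mono_le[of "F k", OF mono] F_D by blast
    then show ?thesis unfolding eventually_sequentially by blast
  qed
  obtain g where g: "\<And>x. \<forall>\<^sub>F k in sequentially. \<forall>m\<ge>g k. x \<in> D k m (h k)"
    using QN_clopen_diagonal[where C="\<lambda>k m. D k m (h k)", OF QN clopen_D D_eventually] by blast
  show ?thesis
  proof (rule that)
    fix x
    from h[of x] g[of x] show "\<forall>\<^sub>F k in sequentially. x \<in> F k (g k)"
    proof eventually_elim
      case (elim k)
      then have "x \<in> D k (g k) (h k)"
        and "\<And>i. h k \<le> i \<Longrightarrow> x \<in> D k (g k) i \<Longrightarrow> x \<in> D k (g k) (Suc i)"
        unfolding Y_def by auto
      then show "x \<in> F k (g k)" by (rule stable_imp_limit[OF approx])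
    qed
  qed
qed

lemma fsigma_iff: "fsigma A \<longleftrightarrow> (\<exists>F::nat \<Rightarrow> 'a::topological_space set. (\<forall>n. closed (F n)) \<and> A = (\<Union>n. F n))"
  unfolding fsigma.simps by blast

lemma fsigma_ascending:
  fixes A :: "'a::topological_space set"
  assumes "fsigma A"
  obtains F :: "nat \<Rightarrow> 'a set"
  where "\<And>n. closed (F n)" and "\<And>n. F n \<subseteq> F (Suc n)" and "A = (\<Union>n. F n)"
proof -
  obtain F0 :: "nat \<Rightarrow> 'a set" where closed_F0: "\<And>n. closed (F0 n)" and A_eq: "A = (\<Union>n. F0 n)"
    using assms unfolding fsigma_iff by blast
  show ?thesis
  proof (rule that[of "\<lambda>n. \<Union>j\<le>n. F0 j"])
    show "closed (\<Union>j\<le>n. F0 j)" for n using closed_F0 by (intro closed_UN) auto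
    show "(\<Union>j\<le>n. F0 j) \<subseteq> (\<Union>j\<le>Suc n. F0 j)" for n by (auto simp: atMost_Suc)
    show "A = (\<Union>n. \<Union>j\<le>n. F0 j)" unfolding A_eq by auto
  qed
qed

lemma fsigma_UN:
  fixes A :: "nat \<Rightarrow> 'a::topological_space set"
  assumes "\<And>i. fsigma (A i)"
  shows "fsigma (\<Union>i. A i)"
proof -
  have "\<forall>i. \<exists>F::nat \<Rightarrow> 'a set. (\<forall>n. closed (F n)) \<and> A i = (\<Union>n. F n)"
    using assms unfolding fsigma_iff by blast
  from choice[OF this] obtain F :: "nat \<Rightarrow> nat \<Rightarrow> 'a set"
    where F: "\<forall>i. (\<forall>n. closed (F i n)) \<and> A i = (\<Union>n. F i n)" by blast
  define H where "H m = F (fst (prod_decode m)) (snd (prod_decode m))" for m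
  have "(\<Union>i. A i) = (\<Union>m. H m)"
  proof (intro equalityI subsetI)
    fix x assume "x \<in> (\<Union>i. A i)"
    then obtain i n where "x \<in> F i n" using F by blast
    then show "x \<in> (\<Union>m. H m)"
      unfolding H_def by (intro UN_I[of "prod_encode (i, n)"]) simp_all
  next
    fix x assume "x \<in> (\<Union>m. H m)"
    then show "x \<in> (\<Union>i. A i)" unfolding H_def using F by blast
  qed
  moreover have "closed (H m)" for m
    unfolding H_def using F by blast
  ultimately show ?thesis unfolding fsigma_iff by blast
qed

(* A point outside every F n that, from some n on, has left D n by stage g n leaves every
   D n by one common stage max (g n) K: the finitely many early n are handled by K. *)
lemma approximation_uniform_escape:
  assumes approx: "clopen_approximation F D" and outside: "\<And>n. x \<notin> F n"
    and escape: "\<forall>\<^sub>F n in sequentially. x \<notin> D n (g n)"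
  obtains K where "\<And>n. x \<notin> D n (max (g n) K)"
proof -
  note D_mono = clopen_approximation_mono[OF approx]
  obtain N where N: "\<And>n. N \<le> n \<Longrightarrow> x \<notin> D n (g n)"
    using escape unfolding eventually_sequentially by blast
  have "\<forall>n. \<exists>i. x \<notin> D n i" using clopen_approximation_limit[OF approx] outside by blast
  then obtain leave where leave: "\<And>n. x \<notin> D n (leave n)" by metis
  define K where "K = (\<Sum>n<N. leave n)"
  have "x \<notin> D n (max (g n) K)" for n
  proof (cases "n < N")
    case True
    then have "leave n \<le> max (g n) K" unfolding K_def using member_le_sum[of n "{..<N}" leave] by simp
    then show ?thesis using leave[of n] D_mono[of n n "leave n" "max (g n) K"] by blast
  next
    case False
    then show ?thesis using N[of n] D_mono[of n n "g n" "max (g n) K"] by auto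
  qed
  then show ?thesis by (rule that)
qed

text \<open>The complement of an ascending union of closed sets F n is written
  as a union of the closed sets - V k, the sets V k being built from the approximations of F.\<close>
lemma QN_fsigma_complement:
  fixes A :: "'a::topological_space set"
  assumes QN: "QN_space TYPE('a)" and space: "countably_clopen_space TYPE('a)" and "fsigma A"
  shows "fsigma (- A)"
proof -
  obtain F :: "nat \<Rightarrow> 'a set" where closed_F: "\<And>n. closed (F n)"
    and mono_F: "\<And>n. F n \<subseteq> F (Suc n)" and A_eq: "A = (\<Union>n. F n)"
    using fsigma_ascending[OF \<open>fsigma A\<close>] by blast
  obtain D where approx: "clopen_approximation F D"
    using clopen_approximation_exists[where F=F, OF space closed_F mono_F] by blast
  note D_clopen = clopen_approximation_clopen[OF approx]
    and D_mono = clopen_approximation_mono[OF approx]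
    and F_D = clopen_approximation_lower[OF approx]
    and D_F = clopen_approximation_limit[OF approx]
  (* x \<in> G n m says: either x already lies in F m, or x has left the approximation D n
     by stage m.  Every point enters G n eventually, so QN yields a single bound g. *)
  define G where "G n m = - D n m \<union> F m" for n m
  have "closed (G n m)" for n m
    unfolding G_def using D_clopen closed_F by (auto simp: clopen_def intro: closed_Un closed_Compl)
  moreover have "G n m \<subseteq> G n (Suc m)" for n m
    unfolding G_def using D_mono[of n n m "Suc m"] mono_F[of m] by auto
  moreover have "\<exists>m. x \<in> G n m" for n x
  proof (cases "x \<in> A")
    case True
    then show ?thesis unfolding A_eq G_def by blast
  next
    case False
    then have "x \<notin> F n" unfolding A_eq by blast
    then obtain i where "x \<notin> D n i" using D_F by blast
    then show ?thesis unfolding G_def by blast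
  qed
  ultimately obtain g where g: "\<And>x. \<forall>\<^sub>F n in sequentially. x \<in> G n (g n)"
    using QN_closed_chain_bound[OF QN space, of G] by blast
  define V where "V k = (\<Union>n. D n (max (g n) k))" for k
  have "open (V k)" for k
    unfolding V_def using D_clopen by (intro open_UN) (auto simp: clopen_def)
  have "A \<subseteq> (\<Inter>k. V k)"
    unfolding A_eq V_def using F_D by blast
  moreover have "(\<Inter>k. V k) \<subseteq> A"
  proof
    fix x assume x_V: "x \<in> (\<Inter>k. V k)"
    show "x \<in> A"
    proof (rule ccontr)
      assume "x \<notin> A"
      then have outside: "\<And>n. x \<notin> F n" unfolding A_eq by blast
      from g[of x] have "\<forall>\<^sub>F n in sequentially. x \<notin> D n (g n)"
        by eventually_elim (use outside in \<open>auto simp: G_def\<close>)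
      then obtain K where "\<And>n. x \<notin> D n (max (g n) K)"
        using approximation_uniform_escape[OF approx outside] by blast
      then show False using x_V unfolding V_def by blast
    qed
  qed
  ultimately have "- A = (\<Union>k. - V k)" by blast
  moreover have "closed (- V k)" for k using \<open>open (V k)\<close> by (rule closed_Compl)
  ultimately show ?thesis unfolding fsigma_iff by (intro exI[of _ "\<lambda>k. - V k"]) simp
qed

lemma QN_borel_fsigma:
  fixes A :: "'a::topological_space set"
  assumes QN: "QN_space TYPE('a)" and space: "countably_clopen_space TYPE('a)"
    and "A \<in> sets borel"
  shows "fsigma A"
proof -
  have "A \<in> sigma_sets UNIV {S. open S}" using assms(3) by (simp add: sets_borel)
  then show ?thesis
  proof (induction rule: sigma_sets.induct)
    case (Basic U)
    then obtain c :: "nat \<Rightarrow> 'a set" where "\<And>i. clopen (c i)" and "U = (\<Union>i. c i)"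
      using open_clopen_sequence[OF space] by blast
    then show ?case unfolding fsigma_iff by (intro exI[of _ c]) (simp add: clopen_def)
  next
    case Empty
    show ?case unfolding fsigma_iff by (intro exI[of _ "\<lambda>_. {}"]) auto
  next
    case (Compl U)
    have "UNIV - U = - U" by blast
    then show ?case using QN_fsigma_complement[OF QN space Compl.IH] by simp
  next
    case (Union U)
    show ?case using Union.IH by (rule fsigma_UN)
  qed
qed

lemma QN_borel_chain_bound:
  fixes A :: "nat \<Rightarrow> nat \<Rightarrow> 'a::topological_space set"
  assumes QN: "QN_space TYPE('a)" and space: "countably_clopen_space TYPE('a)"
    and borel: "\<And>k m. A k m \<in> sets borel" and mono: "\<And>k m. A k m \<subseteq> A k (Suc m)"
    and cover: "\<And>k x. \<exists>m. x \<in> A k m"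
  obtains g where "\<And>x. \<forall>\<^sub>F k in sequentially. x \<in> A k (g k)"
proof -
  have "\<forall>p. \<exists>F::nat \<Rightarrow> 'a set. (\<forall>i. closed (F i)) \<and> A (fst p) (snd p) = (\<Union>i. F i)"
    using QN_borel_fsigma[OF QN space borel] unfolding fsigma_iff by blast
  from choice[OF this] obtain F :: "nat \<times> nat \<Rightarrow> nat \<Rightarrow> 'a set"
    where F: "\<forall>p. (\<forall>i. closed (F p i)) \<and> A (fst p) (snd p) = (\<Union>i. F p i)" by blast
  then have closed_F: "\<And>k m i. closed (F (k, m) i)" and A_eq: "\<And>k m. A k m = (\<Union>i. F (k, m) i)"
    by (metis fst_conv snd_conv)+
  define B where "B k n = (\<Union>m\<le>n. \<Union>i\<le>n. F (k, m) i)" for k n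
  have "closed (B k n)" for k n unfolding B_def using closed_F by (intro closed_UN) auto
  moreover have "B k n \<subseteq> B k (Suc n)" for k n unfolding B_def by force
  moreover have "\<exists>n. x \<in> B k n" for k x
  proof -
    obtain m where "x \<in> A k m" using cover by blast
    then obtain i where "x \<in> F (k, m) i" using A_eq by blast
    then have "x \<in> B k (max m i)" unfolding B_def by force
    then show ?thesis by blast
  qed
  ultimately obtain g where g: "\<And>x. \<forall>\<^sub>F k in sequentially. x \<in> B k (g k)"
    using QN_closed_chain_bound[OF QN space, of B] by blast
  have B_A: "B k n \<subseteq> A k n" for k n
    unfolding B_def using A_eq lift_Suc_mono_le[of "A k", OF mono] by blast
  show ?thesis
  proof (rule that)
    fix x
    from g[of x] show "\<forall>\<^sub>F k in sequentially. x \<in> A k (g k)"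
      by eventually_elim (use B_A in blast)
  qed
qed

text \<open>Forward direction: for Borel \<Psi> the sets {x. \<Psi> x k \<le> m} form Borel chains in m, so one g
  bounds \<Psi> x k for almost all k, for every x.\<close>
lemma QN_imp_Borel_bounded:
  fixes \<Psi> :: "'a::topological_space \<Rightarrow> (nat \<Rightarrow> nat)"
  assumes QN: "QN_space TYPE('a)" and space: "countably_clopen_space TYPE('a)"
    and "Borel_function \<Psi>"
  shows "bounded_baire (range \<Psi>)"
proof -
  define A where "A k m = \<Psi> -` {f. f k \<le> m}" for k m
  have "open {f::nat \<Rightarrow> nat. f k \<le> m}" for k m
  proof -
    have "{f::nat \<Rightarrow> nat. f k \<le> m} = (\<lambda>f. f k) -` {..m}" by auto
    then show ?thesis using continuous_on_open_vimage[of UNIV "\<lambda>f::nat \<Rightarrow> nat. f k"]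
      by (simp add: open_discrete)
  qed
  then have "A k m \<in> sets borel" for k m
    using \<open>Borel_function \<Psi>\<close> unfolding Borel_function_def A_def by blast
  moreover have "A k m \<subseteq> A k (Suc m)" for k m unfolding A_def by auto
  moreover have "\<exists>m. x \<in> A k m" for k x unfolding A_def by auto
  ultimately obtain g where "\<And>x. \<forall>\<^sub>F k in sequentially. x \<in> A k (g k)"
    using QN_borel_chain_bound[OF QN space, of A] by blast
  then show ?thesis unfolding bounded_baire_def A_def by auto
qed

text \<open>Backward direction.  Any g admits a slowly divergent h with g (h n) \<le> n eventually;
  h is the inverse of a strictly increasing majorant G of g.\<close>
lemma slowly_divergent_inverse:
  fixes g :: "nat \<Rightarrow> nat"
  obtains h :: "nat \<Rightarrow> nat"
  where "filterlim h at_top sequentially" and "\<forall>\<^sub>F n in sequentially. g (h n) \<le> n"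
proof -
  define G where "G k = k + (\<Sum>j\<le>k. g j)" for k
  have G_mono: "strict_mono G"
    unfolding strict_mono_Suc_iff G_def by simp
  have g_le_G: "g k \<le> G k" for k
    unfolding G_def using member_le_sum[of k "{..k}" g] by simp
  define h where "h n = (LEAST k. n < G (Suc k))" for n
  have h_bound: "n < G (Suc (h n))" for n
  proof -
    have "n < G (Suc n)" using strict_mono_imp_increasing[OF G_mono, of "Suc n"] by simp
    then show ?thesis unfolding h_def by (rule LeastI)
  qed
  have G_h: "G (h n) \<le> n" if "G 0 \<le> n" for n
  proof (cases "h n")
    case (Suc j)
    then have "\<not> n < G (Suc j)" unfolding h_def by (metis lessI not_less_Least)
    then show ?thesis using Suc by simp
  qed (use that in simp)
  have h_large: "K \<le> h n" if "G K \<le> n" for K n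
  proof -
    have "G K < G (Suc (h n))" using h_bound[of n] that by linarith
    then show ?thesis using G_mono by (simp add: strict_mono_less)
  qed
  show ?thesis
  proof
    show "filterlim h at_top sequentially"
      unfolding filterlim_at_top by (blast intro: eventually_sequentiallyI h_large)
    show "\<forall>\<^sub>F n in sequentially. g (h n) \<le> n"
      by (rule eventually_sequentiallyI[of "G 0"]) (use G_h g_le_G le_trans in blast)
  qed
qed

(* If the modulus of convergence to 0 is bounded by g uniformly for almost all k at each x,
   then \<epsilon> n = 2^(-h n) witnesses quasi-normal convergence. *)
lemma quasi_normal_from_modulus_bound:
  fixes fs :: "nat \<Rightarrow> 'a \<Rightarrow> real" and g :: "nat \<Rightarrow> nat"
  assumes bound: "\<And>x. \<forall>\<^sub>F k in sequentially. \<forall>n\<ge>g k. \<bar>fs n x\<bar> < (1/2)^k"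
  shows "quasi_normal_limit fs (\<lambda>x. 0)"
proof -
  obtain h where h_lim: "filterlim h at_top sequentially"
    and g_h: "\<forall>\<^sub>F n in sequentially. g (h n) \<le> n"
    using slowly_divergent_inverse by blast
  define \<epsilon> where "\<epsilon> n = (1/2::real)^(h n)" for n
  have "\<epsilon> \<longlonglongrightarrow> 0"
    unfolding \<epsilon>_def by (rule tendsto_power_zero[OF h_lim]) simp
  moreover have "\<forall>\<^sub>F n in sequentially. dist (fs n x) 0 < \<epsilon> n" for x
  proof -
    obtain K where K: "\<And>k. K \<le> k \<Longrightarrow> \<forall>n\<ge>g k. \<bar>fs n x\<bar> < (1/2)^k"
      using bound[of x] unfolding eventually_sequentially by blast
    have "\<forall>\<^sub>F n in sequentially. K \<le> h n"
      using h_lim unfolding filterlim_at_top by blast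
    with g_h show ?thesis
      by eventually_elim (use K in \<open>auto simp: \<epsilon>_def\<close>)
  qed
  moreover have "\<forall>n. \<epsilon> n > 0" unfolding \<epsilon>_def by simp
  ultimately show ?thesis unfolding quasi_normal_limit_def by blast
qed

definition convergence_modulus :: "(nat \<Rightarrow> 'a \<Rightarrow> real) \<Rightarrow> 'a \<Rightarrow> nat \<Rightarrow> nat" where
  "convergence_modulus fs x k = (LEAST m. \<forall>n\<ge>m. \<bar>fs n x\<bar> < (1/2)^k)"

lemma convergence_modulus_le_iff:
  assumes "(\<lambda>n. fs n x) \<longlonglongrightarrow> 0"
  shows "convergence_modulus fs x k \<le> m \<longleftrightarrow> (\<forall>n\<ge>m. \<bar>fs n x\<bar> < (1/2)^k)"
proof
  obtain m0 where "\<forall>n\<ge>m0. \<bar>fs n x\<bar> < (1/2::real)^k"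
    using order_tendstoD(2)[OF tendsto_rabs_zero[OF assms], of "(1/2)^k"]
    unfolding eventually_sequentially by auto
  then have "\<forall>n\<ge>convergence_modulus fs x k. \<bar>fs n x\<bar> < (1/2)^k"
    unfolding convergence_modulus_def by (rule LeastI)
  then show "\<forall>n\<ge>m. \<bar>fs n x\<bar> < (1/2)^k" if "convergence_modulus fs x k \<le> m"
    using that by auto
qed (unfold convergence_modulus_def, rule Least_le)

lemma convergence_modulus_Borel:
  fixes fs :: "nat \<Rightarrow> 'a::topological_space \<Rightarrow> real"
  assumes cont: "\<And>n. continuous_on UNIV (fs n)"
  shows "Borel_function (convergence_modulus fs)"
proof -
  have [measurable]: "fs n \<in> borel_measurable borel" for n
    using cont by (rule borel_measurable_continuous_onI)
  have "(\<lambda>x. convergence_modulus fs x k) \<in> measurable borel (count_space UNIV)" for k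
    unfolding convergence_modulus_def by measurable
  then have "(\<lambda>x. convergence_modulus fs x k) \<in> borel_measurable borel" for k
    using measurable_cong_sets[OF refl sets_borel_eq_count_space] by blast
  then have "convergence_modulus fs \<in> borel_measurable borel"
    by (rule measurable_coordinatewise_then_product)
  then show ?thesis
    unfolding Borel_function_def using measurable_sets_borel borel_open by blast
qed

lemma Borel_bounded_imp_QN:
  assumes bounded: "\<forall>\<Psi> :: 'a::topological_space \<Rightarrow> (nat \<Rightarrow> nat). Borel_function \<Psi> \<longrightarrow> bounded_baire (range \<Psi>)"
  shows "QN_space TYPE('a)"
  unfolding QN_space_def
proof (intro allI impI, elim conjE)
  fix fs :: "nat \<Rightarrow> 'a \<Rightarrow> real"
  assume cont: "\<forall>n. continuous_on UNIV (fs n)" and conv: "\<forall>x. (\<lambda>n. fs n x) \<longlonglongrightarrow> 0"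
  have "Borel_function (convergence_modulus fs)"
    using cont by (intro convergence_modulus_Borel) blast
  then have "bounded_baire (range (convergence_modulus fs))"
    using bounded by blast
  then obtain g where "\<forall>f\<in>range (convergence_modulus fs). \<forall>\<^sub>F k in sequentially. f k \<le> g k"
    unfolding bounded_baire_def by blast
  then have g: "\<forall>\<^sub>F k in sequentially. convergence_modulus fs x k \<le> g k" for x
    by blast
  show "quasi_normal_limit fs (\<lambda>x. 0)"
  proof (rule quasi_normal_from_modulus_bound)
    show "\<forall>\<^sub>F k in sequentially. \<forall>n\<ge>g k. \<bar>fs n x\<bar> < (1/2)^k" for x
      using g[of x] by eventually_elim (use convergence_modulus_le_iff[of fs x] conv in blast)
  qed
qed

theorem mainTheorem7:
  assumes "\<forall>U::'a::topological_space set. open U \<longrightarrow>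
             (\<exists>\<C>. countable \<C> \<and> (\<forall>C\<in>\<C>. open C \<and> closed C) \<and> U = \<Union>\<C>)"
  shows "QN_space TYPE('a) \<longleftrightarrow>
           (\<forall>\<Psi> :: 'a \<Rightarrow> (nat \<Rightarrow> nat). Borel_function \<Psi> \<longrightarrow> bounded_baire (range \<Psi>))"
proof
  have space: "countably_clopen_space TYPE('a)"
    using assms unfolding countably_clopen_space_def clopen_def .
  show "\<forall>\<Psi> :: 'a \<Rightarrow> (nat \<Rightarrow> nat). Borel_function \<Psi> \<longrightarrow> bounded_baire (range \<Psi>)"
    if "QN_space TYPE('a)"
    using QN_imp_Borel_bounded[OF that space] by blast
  show "QN_space TYPE('a)"
    if "\<forall>\<Psi> :: 'a \<Rightarrow> (nat \<Rightarrow> nat). Borel_function \<Psi> \<longrightarrow> bounded_baire (range \<Psi>)"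
    using that by (rule Borel_bounded_imp_QN)
qed

end
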